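(* Let $M,\widetilde M\in B$ with $M\le'\widetilde M$. Then there exist a strictly increasing map $\varphi\colon\mathbb{N}\to\mathbb{N}$, a monomial $N\in B_1$ and a monomial $P=z_{t_1}\cdots z_{t_k}$ ($k\ge0$) in the odd variables such that $N\,\widetilde\varphi(M)\,P\equiv\widetilde M\pmod I$.
   Context: Let $D$ be an infinite commutative unital integral domain; $Y=\{y_1,y_2,\dots\}$ (even) and $Z=\{z_1,z_2,\dots\}$ (odd) disjoint sets of variables, $X=Y\cup Z$, $D\langle X\rangle$ the free unital associative $D$-algebra, $L\langle X\rangle$ its Lie subalgebra (bracket $[a,b]=ab-ba$) generated by $X$ with induced grading. An ideal of weak graded identities is a two-sided ideal of $D\langle X\rangle$ closed under all endomorphisms mapping each $y_i$ into $L\langle X\rangle^{(0)}$ and each $z_i$ into $L\langle X\rangle^{(1)}$; $I$ is the smallest such ideal containing $y_1y_2-y_2y_1$, $z_1z_2z_3-z_3z_2z_1$, $y_1z_1+z_1y_1$. $B$ is the set of monomials $y_{a_1}\cdots y_{a_k}$ ($k\ge0$, $a_1\le\dots\le a_k$) — forming $B_1$ — and $y_{a_1}\cdots y_{a_k}z_{c_1}z_{d_1}z_{c_2}z_{d_2}\cdots z_{c_m}z_{d_m}$ or the same word with the final $z_{d_m}$ omitted, where $m\ge1$, $a$'s, $c$'s and present $d$'s nondecreasing — forming $B_2$. Sequences: $V(Q_1)$ is the set of sequences $(s_i)_{i\ge1}$ in $\mathbb{N}_0$ with finitely many nonzero terms; triples of such sequences are identified with sequences $(w_i)_{i\ge1}$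 in $\mathbb{N}_0^3$. Define $\xi(y_{a_1}\cdots y_{a_k})=u^{(1)}$ and $\xi(y_{a_1}\cdots y_{a_k}z_{c_1}z_{d_1}\cdots)=(u^{(1)},u^{(2)},u^{(3)})$, where $u^{(1)}_i=\#\{j:a_j=i\}$, $u^{(2)}_i=\#\{j:c_j=i\}$, $u^{(3)}_i=\#\{j:d_j=i\}$. For sequences $u=(u_i),v=(v_i)$ in $\mathbb{N}_0^n$ write $u\le_s v$ iff there is a strictly increasing $\psi\colon\mathbb{N}\to\mathbb{N}$ with $u_i\le v_{\psi(i)}$ componentwise for all $i$. For $M,\widetilde M\in B$, $M\le'\widetilde M$ iff $M,\widetilde M$ lie both in $B_1$ or both in $B_2$ and $\xi(M)\le_s\xi(\widetilde M)$. For strictly increasing $\varphi$, $\widetilde\varphi$ is the substitution $y_i\mapsto y_{\varphi(i)}$, $z_i\mapsto z_{\varphi(i)}$. *)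

theory Defs
  imports Main
begin

text \<open>Variables: Y i is the even variable y_(i+1), Z i the odd variable z_(i+1)
  (indices shifted to start at 0).\<close>
datatype var = Y nat | Z nat

text \<open>Elements of D<X> are finitely supported coefficient functions on words.\<close>
type_synonym 'd fa = "var list \<Rightarrow> 'd"

definition fa_set :: "('d::zero) fa set" where
  "fa_set = {p. finite {w. p w \<noteq> 0}}"

definition fzero :: "('d::zero) fa" where
  "fzero = (\<lambda>w. 0)"

definition fplus :: "('d::plus) fa \<Rightarrow> 'd fa \<Rightarrow> 'd fa" where
  "fplus p q = (\<lambda>w. p w + q w)"

definition fminus :: "('d::minus) fa \<Rightarrow> 'd fa \<Rightarrow> 'd fa" where
  "fminus p q = (\<lambda>w. p w - q w)"

definition fsmul :: "('d::times) \<Rightarrow> 'd fa \<Rightarrow> 'd fa" where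
  "fsmul c p = (\<lambda>w. c * p w)"

definition fmul :: "('d::comm_semiring_1) fa \<Rightarrow> 'd fa \<Rightarrow> 'd fa" where
  "fmul p q = (\<lambda>w. \<Sum>i\<le>length w. p (take i w) * q (drop i w))"

definition monom :: "var list \<Rightarrow> ('d::comm_semiring_1) fa" where
  "monom u = (\<lambda>w. if w = u then 1 else 0)"

definition fone :: "('d::comm_semiring_1) fa" where
  "fone = monom []"

definition wprod :: "('d::comm_semiring_1) fa list \<Rightarrow> 'd fa" where
  "wprod ps = foldr fmul ps fone"

definition subst :: "(var \<Rightarrow> ('d::comm_semiring_1) fa) \<Rightarrow> 'd fa \<Rightarrow> 'd fa" where
  "subst \<sigma> p = (\<lambda>u. \<Sum>w\<in>{w. p w \<noteq> 0}. p w * wprod (map \<sigma> w) u)"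

definition bracket :: "('d::comm_ring_1) fa \<Rightarrow> 'd fa \<Rightarrow> 'd fa" where
  "bracket a b = fminus (fmul a b) (fmul b a)"

inductive_set lie_gen :: "('d::comm_ring_1) fa set" where
  var: "monom [x] \<in> lie_gen"
| zero: "fzero \<in> lie_gen"
| add: "a \<in> lie_gen \<Longrightarrow> b \<in> lie_gen \<Longrightarrow> fplus a b \<in> lie_gen"
| smul: "a \<in> lie_gen \<Longrightarrow> fsmul c a \<in> lie_gen"
| brk: "a \<in> lie_gen \<Longrightarrow> b \<in> lie_gen \<Longrightarrow> bracket a b \<in> lie_gen"

definition zdeg :: "var list \<Rightarrow> nat" where
  "zdeg w = length [c. Z c \<leftarrow> w]"

definition lie_even :: "('d::comm_ring_1) fa set" where
  "lie_even = {p \<in> lie_gen. \<forall>w. p w \<noteq> 0 \<longrightarrow> even (zdeg w)}"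

definition lie_odd :: "('d::comm_ring_1) fa set" where
  "lie_odd = {p \<in> lie_gen. \<forall>w. p w \<noteq> 0 \<longrightarrow> odd (zdeg w)}"

definition admissible :: "(var \<Rightarrow> ('d::comm_ring_1) fa) \<Rightarrow> bool" where
  "admissible \<sigma> \<longleftrightarrow> (\<forall>i. \<sigma> (Y i) \<in> lie_even \<and> \<sigma> (Z i) \<in> lie_odd)"

definition weak_graded_ideal :: "('d::comm_ring_1) fa set \<Rightarrow> bool" where
  "weak_graded_ideal J \<longleftrightarrow>
     J \<subseteq> fa_set \<and> fzero \<in> J \<and>
     (\<forall>p\<in>J. \<forall>q\<in>J. fplus p q \<in> J) \<and>
     (\<forall>a\<in>fa_set. \<forall>p\<in>J. \<forall>b\<in>fa_set. fmul (fmul a p) b \<in> J) \<and>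
     (\<forall>\<sigma> p. admissible \<sigma> \<longrightarrow> p \<in> J \<longrightarrow> subst \<sigma> p \<in> J)"

definition gens_I :: "('d::comm_ring_1) fa set" where
  "gens_I = {fminus (monom [Y 0, Y 1]) (monom [Y 1, Y 0]),
             fminus (monom [Z 0, Z 1, Z 2]) (monom [Z 2, Z 1, Z 0]),
             fplus (monom [Y 0, Z 0]) (monom [Z 0, Y 0])}"

definition ideal_I :: "('d::comm_ring_1) fa set" where
  "ideal_I = \<Inter> {J. weak_graded_ideal J \<and> gens_I \<subseteq> J}"

definition in_B1 :: "var list \<Rightarrow> bool" where
  "in_B1 w \<longleftrightarrow> (\<exists>as. w = map Y as \<and> sorted as)"

definition in_B2 :: "var list \<Rightarrow> bool" where
  "in_B2 w \<longleftrightarrow> (\<exists>as cs. w = map Y as @ map Z cs \<and> sorted as \<and> cs \<noteq> [] \<and>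
      sorted (nths cs {i. even i}) \<and> sorted (nths cs {i. odd i}))"

definition in_B :: "var list \<Rightarrow> bool" where
  "in_B w \<longleftrightarrow> in_B1 w \<or> in_B2 w"

definition yidx :: "var list \<Rightarrow> nat list" where
  "yidx w = [a. Y a \<leftarrow> w]"

definition zidx :: "var list \<Rightarrow> nat list" where
  "zidx w = [c. Z c \<leftarrow> w]"

text \<open>xi as a sequence of tuples (lists of length 1 for B1, length 3 for B2).\<close>
definition xi :: "var list \<Rightarrow> nat \<Rightarrow> nat list" where
  "xi w = (if in_B1 w then (\<lambda>i. [count_list (yidx w) i])
           else (\<lambda>i. [count_list (yidx w) i,
                       count_list (nths (zidx w) {j. even j}) i,
                       count_list (nths (zidx w) {j. odd j}) i]))"

definition le_s :: "(nat \<Rightarrow> nat list) \<Rightarrow> (nat \<Rightarrow> nat list) \<Rightarrow> bool" where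
  "le_s u v \<longleftrightarrow> (\<exists>\<psi>. strict_mono \<psi> \<and> (\<forall>i. list_all2 (\<le>) (u i) (v (\<psi> i))))"

definition le_B :: "var list \<Rightarrow> var list \<Rightarrow> bool" where
  "le_B M M' \<longleftrightarrow> ((in_B1 M \<and> in_B1 M') \<or> (in_B2 M \<and> in_B2 M')) \<and> le_s (xi M) (xi M')"

fun rename :: "(nat \<Rightarrow> nat) \<Rightarrow> var \<Rightarrow> var" where
  "rename \<phi> (Y i) = Y (\<phi> i)"
| "rename \<phi> (Z i) = Z (\<phi> i)"

definition phi_subst :: "(nat \<Rightarrow> nat) \<Rightarrow> ('d::comm_ring_1) fa \<Rightarrow> 'd fa" where
  "phi_subst \<phi> = subst (\<lambda>v. monom [rename \<phi> v])"

end

theory Submission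
  imports Defs "HOL-Library.Multiset"
begin

text \<open>Modulo \<open>I\<close> the even variables commute and \<open>z\<^sub>a z\<^sub>r z\<^sub>b \<equiv> z\<^sub>b z\<^sub>r z\<^sub>a\<close>, so a monomial
  of \<open>B\<close> may be rearranged by permuting its \<open>y\<close>-indices, its \<open>z\<close>-indices at even positions
  and its \<open>z\<close>-indices at odd positions. The relation \<open>M \<le>' M'\<close> provides \<open>\<psi>\<close> under which each
  of these three multisets of \<open>M\<close> maps into the corresponding one of \<open>M'\<close>. The missing
  \<open>y\<close>'s are supplied by \<open>N\<close> on the left; the missing \<open>z\<close>'s are appended on the right,
  interleaved so that they continue the even/odd pattern of \<open>\<psi>(M)\<close>, and then everything is
  permuted into place.\<close>

lemma fmul_monom: "fmul (monom u) (monom v) = (monom (u @ v) :: 'd::comm_semiring_1 fa)"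
proof
  fix w
  have summand: "monom u (take i w) * monom v (drop i w) = (if i = length u \<and> w = u @ v then 1 else (0::'d))"
    if "i \<le> length w" for i
  proof -
    have "(take i w = u \<and> drop i w = v) \<longleftrightarrow> (i = length u \<and> w = u @ v)"
      using that by (metis append_eq_conv_conj append_take_drop_id length_take min.absorb2)
    then show ?thesis unfolding monom_def by auto
  qed
  have "fmul (monom u :: 'd fa) (monom v) w = (\<Sum>i\<le>length w. if i = length u \<and> w = u @ v then 1 else 0)"
    unfolding fmul_def by (rule sum.cong[OF refl], rule summand) simp
  also have "\<dots> = monom (u @ v) w"
    by (auto simp: monom_def)
  finally show "fmul (monom u) (monom v) w = (monom (u @ v) :: 'd fa) w" .
qed

lemma fmul_fminus_left: "fmul (fminus p q) a = fminus (fmul p a) (fmul q a :: 'd::comm_ring_1 fa)"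
  unfolding fmul_def fminus_def by (simp add: sum_subtractf left_diff_distrib)

lemma fmul_fminus_right: "fmul a (fminus p q) = fminus (fmul a p) (fmul a q :: 'd::comm_ring_1 fa)"
  unfolding fmul_def fminus_def by (simp add: sum_subtractf right_diff_distrib)

lemma monom_in_fa_set: "(monom u :: 'd::comm_semiring_1 fa) \<in> fa_set"
proof -
  have "{w. monom u w \<noteq> (0::'d)} \<subseteq> {u}" by (auto simp: monom_def)
  then show ?thesis unfolding fa_set_def by (auto intro: finite_subset)
qed

lemma wprod_map_monom: "wprod (map (\<lambda>x. monom [g x]) w) = (monom (map g w) :: 'd::comm_semiring_1 fa)"
  by (induct w) (simp_all add: wprod_def fone_def fmul_monom)

lemma subst_rename_monom: "subst (\<lambda>x. monom [g x]) (monom u) = (monom (map g u) :: 'd::comm_ring_1 fa)"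
proof -
  have "{w. monom u w \<noteq> (0::'d)} = {u}" by (auto simp: monom_def)
  then show ?thesis unfolding subst_def by (simp add: wprod_map_monom monom_def[of u])
qed

lemma subst_rename_monom_diff:
  assumes "u \<noteq> v"
  shows "subst (\<lambda>x. monom [g x]) (fminus (monom u) (monom v))
           = fminus (monom (map g u)) (monom (map g v) :: 'd::comm_ring_1 fa)"
proof
  fix x
  let ?p = "fminus (monom u) (monom v) :: 'd fa"
  have p: "?p w = (if w = u then 1 else if w = v then -1 else 0)" for w
    using assms by (simp add: fminus_def monom_def)
  then have "{w. ?p w \<noteq> 0} = {u, v}" by auto
  then have "subst (\<lambda>x. monom [g x]) ?p x = ?p u * monom (map g u) x + ?p v * monom (map g v) x"
    using assms by (simp add: subst_def wprod_map_monom)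
  then show "subst (\<lambda>x. monom [g x]) ?p x = fminus (monom (map g u)) (monom (map g v)) x"
    using assms by (simp only: p) (simp add: fminus_def)
qed

lemma phi_subst_monom: "phi_subst \<phi> (monom M) = (monom (map (rename \<phi>) M) :: 'd::comm_ring_1 fa)"
  unfolding phi_subst_def by (rule subst_rename_monom)

lemma admissible_rename: "admissible (\<lambda>x. monom [rename f x] :: 'd::comm_ring_1 fa)"
proof -
  have "(monom [x] :: 'd fa) w \<noteq> 0 \<Longrightarrow> w = [x]" for x w
    by (simp add: monom_def split: if_splits)
  moreover have "zdeg [Y a] = 0" "zdeg [Z a] = 1" for a
    by (simp_all add: zdeg_def)
  ultimately show ?thesis
    unfolding admissible_def lie_even_def lie_odd_def by (fastforce intro: lie_gen.var)
qed

lemma gens_I_subset_ideal_I: "gens_I \<subseteq> (ideal_I :: 'd::comm_ring_1 fa set)"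
  unfolding ideal_I_def by auto

lemma ideal_I_fzero: "fzero \<in> (ideal_I :: 'd::comm_ring_1 fa set)"
  unfolding ideal_I_def weak_graded_ideal_def by auto

lemma ideal_I_fplus: "p \<in> ideal_I \<Longrightarrow> q \<in> ideal_I \<Longrightarrow> fplus p q \<in> (ideal_I :: 'd::comm_ring_1 fa set)"
  unfolding ideal_I_def weak_graded_ideal_def by auto

lemma ideal_I_fmul:
  "p \<in> ideal_I \<Longrightarrow> a \<in> fa_set \<Longrightarrow> b \<in> fa_set \<Longrightarrow> fmul (fmul a p) b \<in> (ideal_I :: 'd::comm_ring_1 fa set)"
  unfolding ideal_I_def weak_graded_ideal_def by auto

lemma ideal_I_subst: "p \<in> ideal_I \<Longrightarrow> admissible \<sigma> \<Longrightarrow> subst \<sigma> p \<in> (ideal_I :: 'd::comm_ring_1 fa set)"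
  unfolding ideal_I_def weak_graded_ideal_def by auto

(* The itself argument only fixes the coefficient ring. *)
definition I_equiv :: "'d::comm_ring_1 itself \<Rightarrow> var list \<Rightarrow> var list \<Rightarrow> bool" where
  "I_equiv T u v \<longleftrightarrow> fminus (monom u) (monom v) \<in> (ideal_I :: 'd fa set)"

lemma I_equiv_refl: "I_equiv (T::'d::comm_ring_1 itself) u u"
proof -
  have "fminus (monom u) (monom u) = (fzero :: 'd fa)"
    by (simp add: fminus_def fzero_def)
  then show ?thesis unfolding I_equiv_def using ideal_I_fzero by metis
qed

lemma I_equiv_trans:
  assumes "I_equiv (T::'d::comm_ring_1 itself) u v" and "I_equiv T v w"
  shows "I_equiv T u w"
proof -
  have "fminus (monom u) (monom w)
          = fplus (fminus (monom u) (monom v)) (fminus (monom v) (monom w) :: 'd fa)"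
    by (simp add: fminus_def fplus_def)
  then show ?thesis using assms ideal_I_fplus unfolding I_equiv_def by metis
qed

lemma I_equiv_context:
  assumes "I_equiv (T::'d::comm_ring_1 itself) u v"
  shows "I_equiv T (p @ u @ q) (p @ v @ q)"
proof -
  have "fmul (fmul (monom p) (fminus (monom u) (monom v))) (monom q)
          = fminus (monom (p @ u @ q)) (monom (p @ v @ q) :: 'd fa)"
    by (simp add: fmul_fminus_left fmul_fminus_right fmul_monom)
  then show ?thesis
    using assms ideal_I_fmul[OF _ monom_in_fa_set monom_in_fa_set] unfolding I_equiv_def by metis
qed

lemma I_equiv_rename_generator:
  assumes "fminus (monom u) (monom v) \<in> (gens_I :: 'd::comm_ring_1 fa set)" and "u \<noteq> v"
  shows "I_equiv (T::'d itself) (map (rename f) u) (map (rename f) v)"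
  using ideal_I_subst[OF subsetD[OF gens_I_subset_ideal_I assms(1)] admissible_rename]
  unfolding I_equiv_def subst_rename_monom_diff[OF assms(2)] .

lemma I_equiv_Y_swap: "I_equiv (T::'d::comm_ring_1 itself) [Y a, Y b] [Y b, Y a]"
  using I_equiv_rename_generator[of "[Y 0, Y 1]" "[Y 1, Y 0]" T "\<lambda>i. if i = 0 then a else b"]
  by (simp add: gens_I_def)

lemma I_equiv_Z_reverse: "I_equiv (T::'d::comm_ring_1 itself) [Z a, Z r, Z b] [Z b, Z r, Z a]"
  using I_equiv_rename_generator[of "[Z 0, Z 1, Z 2]" "[Z 2, Z 1, Z 0]" T
      "\<lambda>i. if i = 0 then a else if i = 1 then r else b"]
  by (simp add: gens_I_def)

definition adj_swap :: "'a list \<Rightarrow> 'a list \<Rightarrow> bool" where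
  "adj_swap u v \<longleftrightarrow> (\<exists>p a b q. u = p @ a # b # q \<and> v = p @ b # a # q)"

lemma adj_swap_Cons: "adj_swap u v \<Longrightarrow> adj_swap (x # u) (x # v)"
  unfolding adj_swap_def by (metis append_Cons)

lemma adj_swaps_Cons: "adj_swap\<^sup>*\<^sup>* u v \<Longrightarrow> adj_swap\<^sup>*\<^sup>* (x # u) (x # v)"
  by (induct rule: rtranclp_induct) (auto intro: rtranclp.rtrancl_into_rtrancl adj_swap_Cons)

lemma adj_swaps_move: "adj_swap\<^sup>*\<^sup>* (x # p @ r) (p @ x # r)"
proof (induct p)
  case (Cons y p)
  have "adj_swap (x # y # p @ r) (y # x # p @ r)"
    unfolding adj_swap_def by (metis append_Nil)
  with adj_swaps_Cons[OF Cons] show ?case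
    by (simp add: converse_rtranclp_into_rtranclp)
qed simp

lemma mset_eq_imp_adj_swaps: "mset xs = mset ys \<Longrightarrow> adj_swap\<^sup>*\<^sup>* xs ys"
proof (induct xs arbitrary: ys)
  case (Cons x xs)
  then have "x \<in> set ys" by (metis list.set_intros(1) set_mset_mset)
  then obtain p r where ys: "ys = p @ x # r" by (meson split_list)
  with Cons.prems have "mset xs = mset (p @ r)" by simp
  then have "adj_swap\<^sup>*\<^sup>* (x # xs) (x # p @ r)" by (intro adj_swaps_Cons Cons.hyps)
  then show ?case using adj_swaps_move ys by (metis rtranclp_trans)
qed simp

lemma preorder_image_of_mset_eq:
  assumes "mset xs = mset ys"
    and refl: "\<And>x. Q x x"
    and trans: "\<And>x y z. Q x y \<Longrightarrow> Q y z \<Longrightarrow> Q x z"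
    and swap: "\<And>p a b q. length (p @ a # b # q) = length xs \<Longrightarrow> Q (F (p @ a # b # q)) (F (p @ b # a # q))"
  shows "Q (F xs) (F ys)"
proof -
  have "length zs = length xs \<and> Q (F xs) (F zs)" if "adj_swap\<^sup>*\<^sup>* xs zs" for zs
    using that
  proof (induct rule: rtranclp_induct)
    case (step y z)
    then obtain p a b q where "y = p @ a # b # q" "z = p @ b # a # q"
      by (auto simp: adj_swap_def)
    with step swap[of p a b q] show ?case by (auto intro: trans)
  qed (simp add: refl)
  with mset_eq_imp_adj_swaps[OF assms(1)] show ?thesis by blast
qed

function interleave :: "'a list \<Rightarrow> 'a list \<Rightarrow> 'a list" where
  "interleave [] ys = ys"
| "interleave (x # xs) ys = x # interleave ys xs"
  by pat_completeness auto
termination by (relation "measure (\<lambda>(xs, ys). length xs + length ys)") auto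

abbreviation evens :: "'a list \<Rightarrow> 'a list" where
  "evens xs \<equiv> nths xs {i. even i}"

abbreviation odds :: "'a list \<Rightarrow> 'a list" where
  "odds xs \<equiv> nths xs {i. odd i}"

lemma evens_Cons [simp]: "evens (x # xs) = x # odds xs"
  by (simp add: nths_Cons)

lemma odds_Cons [simp]: "odds (x # xs) = evens xs"
  by (simp add: nths_Cons)

lemma interleave_evens_odds: "interleave (evens xs) (odds xs) = xs"
  by (induct xs) simp_all

lemma length_evens_odds:
  "length (odds xs) \<le> length (evens xs)" "length (evens xs) \<le> Suc (length (odds xs))"
  by (induct xs) simp_all

lemma map_interleave: "map f (interleave xs ys) = interleave (map f xs) (map f ys)"
  by (induct xs ys rule: interleave.induct) simp_all

lemma interleave_append_same_length:
  "length xs = length ys \<Longrightarrow> interleave (xs @ as) (ys @ bs) = interleave xs ys @ interleave as bs"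
proof (induct xs arbitrary: ys)
  case (Cons x xs)
  then show ?case by (cases ys) auto
qed simp

lemma interleave_append:
  assumes "length ys \<le> length xs" and "length xs \<le> Suc (length ys)"
  obtains ts where "interleave (xs @ as) (ys @ bs) = interleave xs ys @ ts"
proof (cases "length xs = length ys")
  case True
  with that show ?thesis by (simp add: interleave_append_same_length)
next
  case False
  with assms obtain x xs' where "xs = x # xs'" "length xs' = length ys"
    by (cases xs) auto
  with that show ?thesis by (simp add: interleave_append_same_length)
qed

lemma interleave_swap_left:
  "length (p @ a # b # q) \<le> Suc (length ys) \<Longrightarrow>
   \<exists>u r v. interleave (p @ a # b # q) ys = u @ [a, r, b] @ v \<and>
           interleave (p @ b # a # q) ys = u @ [b, r, a] @ v"
proof (induct p arbitrary: ys)
  case Nil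
  then obtain r ys' where "ys = r # ys'" by (cases ys) auto
  then show ?case by (intro exI[of _ "[]"] exI[of _ r] exI[of _ "interleave ys' q"]) simp
next
  case (Cons x p)
  then obtain y ys' where ys: "ys = y # ys'" by (cases ys) auto
  with Cons.prems obtain u r v where
    "interleave (p @ a # b # q) ys' = u @ [a, r, b] @ v"
    "interleave (p @ b # a # q) ys' = u @ [b, r, a] @ v"
    using Cons.hyps[of ys'] by auto
  with ys show ?case by (intro exI[of _ "x # y # u"]) simp
qed

lemma interleave_swap_right:
  assumes "length (p @ a # b # q) \<le> length xs"
  shows "\<exists>u r v. interleave xs (p @ a # b # q) = u @ [a, r, b] @ v \<and>
                 interleave xs (p @ b # a # q) = u @ [b, r, a] @ v"
proof -
  from assms obtain x xs' where xs: "xs = x # xs'" by (cases xs) auto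
  with assms obtain u r v where
    "interleave (p @ a # b # q) xs' = u @ [a, r, b] @ v"
    "interleave (p @ b # a # q) xs' = u @ [b, r, a] @ v"
    using interleave_swap_left[of p a b q xs'] by auto
  with xs show ?thesis by (intro exI[of _ "x # u"]) simp
qed

lemma I_equiv_permute_Y:
  assumes "mset as = mset bs"
  shows "I_equiv (T::'d::comm_ring_1 itself) (map Y as @ w) (map Y bs @ w)"
  using assms
proof (rule preorder_image_of_mset_eq[where Q = "I_equiv T"])
  show "I_equiv T (map Y (p @ a # b # q) @ w) (map Y (p @ b # a # q) @ w)" for p a b q
    using I_equiv_context[OF I_equiv_Y_swap[of T a b], of "map Y p" "map Y q @ w"] by simp
qed (auto intro: I_equiv_refl I_equiv_trans)

lemma I_equiv_permute_evens:
  assumes "mset xs = mset xs'" and "length xs \<le> Suc (length ys)"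
  shows "I_equiv (T::'d::comm_ring_1 itself) (w @ map Z (interleave xs ys)) (w @ map Z (interleave xs' ys))"
  using assms(1)
proof (rule preorder_image_of_mset_eq[where Q = "I_equiv T"])
  fix p q :: "nat list" and a b :: nat
  assume "length (p @ a # b # q) = length xs"
  with assms(2) obtain u r v where
    "interleave (p @ a # b # q) ys = u @ [a, r, b] @ v"
    "interleave (p @ b # a # q) ys = u @ [b, r, a] @ v"
    using interleave_swap_left by metis
  with I_equiv_context[OF I_equiv_Z_reverse[of T a r b], of "w @ map Z u" "map Z v"]
  show "I_equiv T (w @ map Z (interleave (p @ a # b # q) ys)) (w @ map Z (interleave (p @ b # a # q) ys))"
    by simp
qed (auto intro: I_equiv_refl I_equiv_trans)

lemma I_equiv_permute_odds:
  assumes "mset ys = mset ys'" and "length ys \<le> length xs"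
  shows "I_equiv (T::'d::comm_ring_1 itself) (w @ map Z (interleave xs ys)) (w @ map Z (interleave xs ys'))"
  using assms(1)
proof (rule preorder_image_of_mset_eq[where Q = "I_equiv T"])
  fix p q :: "nat list" and a b :: nat
  assume "length (p @ a # b # q) = length ys"
  with assms(2) obtain u r v where
    "interleave xs (p @ a # b # q) = u @ [a, r, b] @ v"
    "interleave xs (p @ b # a # q) = u @ [b, r, a] @ v"
    using interleave_swap_right by metis
  with I_equiv_context[OF I_equiv_Z_reverse[of T a r b], of "w @ map Z u" "map Z v"]
  show "I_equiv T (w @ map Z (interleave xs (p @ a # b # q))) (w @ map Z (interleave xs (p @ b # a # q)))"
    by simp
qed (auto intro: I_equiv_refl I_equiv_trans)

lemma I_equiv_permute:
  assumes "mset as = mset as'" and "mset xs = mset xs'" and "mset ys = mset ys'"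
    and "length ys' \<le> length xs'" and "length xs' \<le> Suc (length ys')"
  shows "I_equiv (T::'d::comm_ring_1 itself)
           (map Y as @ map Z (interleave xs ys)) (map Y as' @ map Z (interleave xs' ys'))"
proof -
  have "length xs = length xs'" "length ys = length ys'"
    using assms(2,3) by (metis size_mset)+
  then have "I_equiv T (map Y as' @ map Z (interleave xs ys)) (map Y as' @ map Z (interleave xs' ys))"
    and "I_equiv T (map Y as' @ map Z (interleave xs' ys)) (map Y as' @ map Z (interleave xs' ys'))"
    using assms by (auto intro: I_equiv_permute_evens I_equiv_permute_odds)
  with I_equiv_permute_Y[OF assms(1)] show ?thesis
    by (blast intro: I_equiv_trans)
qed

lemma yidx_append [simp]: "yidx (u @ v) = yidx u @ yidx v"
  by (simp add: yidx_def)

lemma zidx_append [simp]: "zidx (u @ v) = zidx u @ zidx v"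
  by (simp add: zidx_def)

lemma yidx_map_Y [simp]: "yidx (map Y as) = as"
  by (induct as) (simp_all add: yidx_def)

lemma yidx_map_Z [simp]: "yidx (map Z cs) = []"
  by (induct cs) (simp_all add: yidx_def)

lemma zidx_map_Y [simp]: "zidx (map Y as) = []"
  by (induct as) (simp_all add: zidx_def)

lemma zidx_map_Z [simp]: "zidx (map Z cs) = cs"
  by (induct cs) (simp_all add: zidx_def)

lemma in_B_split: "in_B w \<Longrightarrow> w = map Y (yidx w) @ map Z (zidx w)"
  unfolding in_B_def in_B1_def in_B2_def by auto

lemma in_B1_zidx: "in_B1 w \<Longrightarrow> zidx w = []"
  unfolding in_B1_def by auto

lemma in_B2_not_in_B1: "in_B2 w \<Longrightarrow> \<not> in_B1 w"
  unfolding in_B2_def by (auto dest: in_B1_zidx)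

lemma le_B_counts:
  assumes "le_B M M'"
  obtains \<psi> where "strict_mono \<psi>"
    and "\<And>i. count_list (yidx M) i \<le> count_list (yidx M') (\<psi> i)"
    and "\<And>i. count_list (evens (zidx M)) i \<le> count_list (evens (zidx M')) (\<psi> i)"
    and "\<And>i. count_list (odds (zidx M)) i \<le> count_list (odds (zidx M')) (\<psi> i)"
proof -
  from assms obtain \<psi> where "strict_mono \<psi>" and le: "\<And>i. list_all2 (\<le>) (xi M i) (xi M' (\<psi> i))"
    by (auto simp: le_B_def le_s_def)
  from assms consider "in_B1 M" "in_B1 M'" | "in_B2 M" "in_B2 M'"
    by (auto simp: le_B_def)
  then show ?thesis
  proof cases
    case 1
    with le show ?thesis
      by (intro that[OF \<open>strict_mono \<psi>\<close>]) (simp_all add: xi_def in_B1_zidx)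
  next
    case 2
    with le show ?thesis
      by (intro that[OF \<open>strict_mono \<psi>\<close>]) (simp_all add: xi_def in_B2_not_in_B1)
  qed
qed

lemma mset_append_map_complement:
  assumes "inj f" and "\<And>i. count_list xs i \<le> count_list ys (f i)"
  obtains zs where "mset (map f xs @ zs) = mset ys"
proof -
  have "count_list (map f xs) j \<le> count_list ys j" for j
  proof (cases "j \<in> range f")
    case True
    then obtain i where "j = f i" by auto
    with assms show ?thesis by (simp add: count_list_map_conv)
  next
    case False
    then have "j \<notin> set (map f xs)" by auto
    then show ?thesis by (simp add: count_list_0_iff)
  qed
  then have "mset (map f xs) \<subseteq># mset ys" unfolding subseteq_mset_def count_mset by blast
  then obtain C where "mset ys = mset (map f xs) + C"
    by (auto simp: mset_subset_eq_exists_conv)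
  moreover obtain zs where "mset zs = C" using ex_mset by blast
  ultimately show ?thesis using that[of zs] by simp
qed

lemma le_B_imp_I_equiv_extension:
  assumes "in_B M" and "in_B Mt" and "le_B M Mt"
  obtains \<psi> ns ts where "strict_mono \<psi>"
    and "I_equiv (T::'d::comm_ring_1 itself) (map Y (sort ns) @ map (rename \<psi>) M @ map Z ts) Mt"
proof -
  obtain \<psi> where "strict_mono \<psi>"
    and cY: "\<And>i. count_list (yidx M) i \<le> count_list (yidx Mt) (\<psi> i)"
    and cE: "\<And>i. count_list (evens (zidx M)) i \<le> count_list (evens (zidx Mt)) (\<psi> i)"
    and cO: "\<And>i. count_list (odds (zidx M)) i \<le> count_list (odds (zidx Mt)) (\<psi> i)"
    using le_B_counts[OF assms(3)] by blast
  have "inj \<psi>" using \<open>strict_mono \<psi>\<close> by (rule strict_mono_imp_inj_on)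
  obtain ns where ns: "mset (map \<psi> (yidx M) @ ns) = mset (yidx Mt)"
    using mset_append_map_complement[OF \<open>inj \<psi>\<close> cY] .
  obtain es where es: "mset (map \<psi> (evens (zidx M)) @ es) = mset (evens (zidx Mt))"
    using mset_append_map_complement[OF \<open>inj \<psi>\<close> cE] .
  obtain os where os: "mset (map \<psi> (odds (zidx M)) @ os) = mset (odds (zidx Mt))"
    using mset_append_map_complement[OF \<open>inj \<psi>\<close> cO] .
  have "interleave (map \<psi> (evens (zidx M))) (map \<psi> (odds (zidx M))) = map \<psi> (zidx M)"
    by (simp add: map_interleave[symmetric] interleave_evens_odds)
  then obtain ts where ts: "interleave (map \<psi> (evens (zidx M)) @ es) (map \<psi> (odds (zidx M)) @ os)
                              = map \<psi> (zidx M) @ ts"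
    using interleave_append[of "map \<psi> (odds (zidx M))" "map \<psi> (evens (zidx M))" es os]
      length_evens_odds[of "zidx M"] by auto
  have "I_equiv T
          (map Y (sort ns @ map \<psi> (yidx M)) @ map Z (map \<psi> (zidx M) @ ts))
          (map Y (yidx Mt) @ map Z (interleave (evens (zidx Mt)) (odds (zidx Mt))))"
    unfolding ts[symmetric] using ns es os
    by (intro I_equiv_permute) (simp_all add: length_evens_odds ac_simps)
  moreover have "map (rename \<psi>) M = map Y (map \<psi> (yidx M)) @ map Z (map \<psi> (zidx M))"
    by (subst in_B_split[OF assms(1)]) simp
  ultimately show ?thesis
    using that \<open>strict_mono \<psi>\<close> in_B_split[OF assms(2)] by (simp add: interleave_evens_odds)
qed

theorem mainTheorem14:
  fixes M Mt :: "var list"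
  assumes "infinite (UNIV :: ('d::idom) set)"
    and "in_B M" and "in_B Mt"
    and "le_B M Mt"
  shows "\<exists>\<phi> N ts. strict_mono \<phi> \<and> in_B1 N \<and>
           fminus (fmul (fmul (monom N) (phi_subst \<phi> (monom M))) (monom (map Z ts)))
                  (monom Mt :: 'd fa) \<in> ideal_I"
proof -
  obtain \<psi> ns ts where "strict_mono \<psi>"
    and "I_equiv TYPE('d) (map Y (sort ns) @ map (rename \<psi>) M @ map Z ts) Mt"
    using le_B_imp_I_equiv_extension[OF assms(2-4)] .
  moreover have "in_B1 (map Y (sort ns))"
    unfolding in_B1_def by auto
  ultimately show ?thesis
    by (auto simp: I_equiv_def phi_subst_monom fmul_monom)
qed

end
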